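(* Let $n\ge4$, $0<\alpha_2,\alpha_3<1$, $\alpha_1=1-\alpha_2-\alpha_3$, $\lambda^*=\big(\frac{n-1+\alpha_1}{n},\frac{\alpha_2}{n},\frac{\alpha_3}{n}\big)$. Then $$\sum_{\substack{i\in I\\ i_2\ge1,\ i_3\ge1}}|l_i(\lambda^* )|\le\frac{5\cdot2^{n+1}}{e\,n(\ln n-1)}\Big(1+\frac{15}{n-3}\Big).$$
   Context: For an integer $n\ge1$ let $I=\{i=(i_1,i_2,i_3)\in\mathbb{Z}_+^3: i_1+i_2+i_3=n\}$ and $l_i(\lambda)=\prod_{s=1}^{3}\frac{1}{i_s!}\prod_{t=0}^{i_s-1}(n\lambda_s-t)$ for $\lambda=(\lambda_1,\lambda_2,\lambda_3)$ (Lagrange fundamental polynomials for the equally spaced nodes $i/n$ of a triangle in barycentric coordinates). *)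

theory Defs
  imports Complex_Main
begin

definition lagr_idx :: "nat \<Rightarrow> (nat \<times> nat \<times> nat) set" where
  "lagr_idx n = {(i1, i2, i3). i1 + i2 + i3 = n}"

definition lagr_factor :: "nat \<Rightarrow> nat \<Rightarrow> real \<Rightarrow> real" where
  "lagr_factor n k x = (\<Prod>t<k. real n * x - real t) / fact k"

text \<open>Lagrange fundamental polynomial l_i(lambda) in barycentric coordinates.\<close>
definition lagr_l :: "nat \<Rightarrow> nat \<times> nat \<times> nat \<Rightarrow> real \<times> real \<times> real \<Rightarrow> real" where
  "lagr_l n i lam = (case i of (i1, i2, i3) \<Rightarrow> case lam of (l1, l2, l3) \<Rightarrow>
      lagr_factor n i1 l1 * lagr_factor n i2 l2 * lagr_factor n i3 l3)"

end

theory Submission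
  imports Defs "HOL-Analysis.Convex"
begin

text \<open>
  With x = n - a2 - a3 we have lambda* = (x, a2, a3) / n, so each l_i(lambda*) is a product of
  generalized binomial coefficients x gchoose i1, a2 gchoose i2 and a3 gchoose i3. For 0 \<le> p \<le> 1
  one has |p gchoose k| \<le> p k^(-1-p), and (n - s) gchoose (n - m) \<le> (n choose m) ((m+1)/(n+1))^s.
  Group the indices by m = i2 + i3. In each term, the coefficient with the larger lower index j \<ge> m/2
  is bounded through max_q q (3/n)^q \<le> 3/(e^2 (ln n - 1)), and the other one is summed as a
  telescoping series. This bounds the m-th row by a constant times (n choose m)/m, and the sums of
  (n choose m)/(m+1) and (n choose m)/((m+1)(m+2)) are bounded by shifted binomial row sums.
\<close>

lemma one_less_ln:
  fixes x :: real
  assumes "3 < x"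
  shows "1 < ln x"
  using ln_less_cancel_iff[of "exp 1" x] exp_le assms by simp

lemma one_plus_mult_ln_le_powr:
  fixes x c :: real
  assumes "0 < x"
  shows "1 + c * ln x \<le> x powr c"
  using exp_ge_add_one_self[of "c * ln x"] assms by (simp add: powr_def mult.commute)

lemma diff_mult_succ_powr_le:
  fixes j c :: real
  assumes "0 < j" "0 \<le> c"
  shows "(j - c) * (j + 1) powr c \<le> j * j powr c"
proof -
  have "- (1 / j) \<le> ln (j / (j + 1))"
    using ln_add_one_self_le_self[of "1 / j"] assms by (simp add: ln_div field_simps)
  then have "1 - c / j \<le> 1 + c * ln (j / (j + 1))"
    using mult_left_mono[of "- (1 / j)" _ c] assms(2) by simp
  also have "\<dots> \<le> j powr c / (j + 1) powr c"
    using one_plus_mult_ln_le_powr[of "j / (j + 1)" c] assms by (simp add: powr_divide)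
  finally have ratio: "(1 - c / j) * (j + 1) powr c \<le> j powr c"
    using assms by (simp add: pos_le_divide_eq)
  have "(j - c) * (j + 1) powr c = j * ((1 - c / j) * (j + 1) powr c)"
    using assms by (simp add: field_simps)
  also have "\<dots> \<le> j * j powr c"
    using ratio assms by (intro mult_left_mono) auto
  finally show ?thesis .
qed

lemma one_plus_div_succ_le_powr_ratio:
  fixes K p :: real
  assumes "0 < K" "0 \<le> p"
  shows "1 + p / (K + 1) \<le> (K + 1) powr p / K powr p"
proof -
  have "1 / (K + 1) \<le> ln ((K + 1) / K)"
    using ln_le_minus_one[of "K / (K + 1)"] assms by (simp add: ln_div field_simps)
  then have "1 + p / (K + 1) \<le> 1 + p * ln ((K + 1) / K)"
    using mult_left_mono[of "1 / (K + 1)" _ p] assms(2) by simp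
  also have "\<dots> \<le> (K + 1) powr p / K powr p"
    using one_plus_mult_ln_le_powr[of "(K + 1) / K" p] assms by (simp add: powr_divide)
  finally show ?thesis .
qed

lemma gbinomial_Suc_right:
  fixes a :: "'a::field_char_0"
  shows "a gchoose Suc k = (a gchoose k) * (a - of_nat k) / of_nat (Suc k)"
  by (simp add: gbinomial_prod_rev)

lemma lagr_factor_eq_gbinomial:
  "0 < n \<Longrightarrow> lagr_factor n k (x / real n) = x gchoose k"
  by (simp add: lagr_factor_def gbinomial_prod_rev atLeast0LessThan)

lemma abs_lagr_l_div:
  "0 < n \<Longrightarrow> \<bar>lagr_l n (k, i, j) (x / real n, y / real n, z / real n)\<bar>
     = \<bar>x gchoose k\<bar> * \<bar>y gchoose i\<bar> * \<bar>z gchoose j\<bar>"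
  by (simp add: lagr_l_def lagr_factor_eq_gbinomial abs_mult)

lemma gbinomial_pos:
  fixes x :: real
  assumes "real k < x + 1"
  shows "0 < x gchoose k"
  using assms by (auto simp: gbinomial_prod_rev intro!: prod_pos divide_pos_pos)

lemma abs_gbinomial_le:
  fixes p :: real
  assumes "0 \<le> p" "p \<le> 1" "1 \<le> k"
  shows "\<bar>p gchoose k\<bar> \<le> p / (real k * real k powr p)"
  using assms(3)
proof (induction k rule: nat_induct_at_least)
  case base
  then show ?case using assms by simp
next
  case (Suc k)
  have k: "1 \<le> real k" using Suc by simp
  have pos: "0 < real k powr p" "0 < (real k + 1) powr p" using k by simp_all
  have "\<bar>p gchoose Suc k\<bar> = \<bar>p gchoose k\<bar> * (real k - p) / (real k + 1)"
    using assms k by (simp add: gbinomial_Suc_right abs_mult)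
  also have "\<dots> \<le> p / (real k * real k powr p) * (real k - p) / (real k + 1)"
    using Suc.IH assms k by (intro divide_right_mono mult_right_mono) auto
  also have "\<dots> \<le> p / (real k * real k powr p) * (real k * real k powr p / (real k + 1) powr p)
                   / (real k + 1)"
    using diff_mult_succ_powr_le[of "real k" p] assms k pos
    by (intro divide_right_mono mult_left_mono) (auto simp: pos_le_divide_eq)
  also have "\<dots> = p / (real (Suc k) * real (Suc k) powr p)"
    using k pos by (simp add: add.commute)
  finally show ?case .
qed

lemma gbinomial_le_binomial_powr:
  fixes s :: real
  assumes "0 \<le> s" "s < real n - real k + 1"
  shows "(real n - s) gchoose k \<le> real (n choose k) * ((real n - real k + 1) / (real n + 1)) powr s"
  using assms(2)
proof (induction k)
  case 0
  then show ?case by simp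
next
  case (Suc k)
  define j where "j = real n - real k"
  have j: "s < j" "0 < j" using Suc.prems assms(1) by (simp_all add: j_def)
  have "(real n - s) gchoose Suc k = ((real n - s) gchoose k) * (j - s) / (real k + 1)"
    by (simp add: gbinomial_Suc_right j_def algebra_simps)
  also have "\<dots> \<le> real (n choose k) * ((j + 1) / (real n + 1)) powr s * (j - s) / (real k + 1)"
    using Suc j by (intro divide_right_mono mult_right_mono) (auto simp: j_def)
  also have "\<dots> = real (n choose k) * ((j - s) * (j + 1) powr s) / ((real n + 1) powr s * (real k + 1))"
    using j by (simp add: powr_divide)
  also have "\<dots> \<le> real (n choose k) * (j * j powr s) / ((real n + 1) powr s * (real k + 1))"
    using diff_mult_succ_powr_le[of j s] j assms(1)
    by (intro divide_right_mono mult_left_mono) auto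
  also have "\<dots> = real (n choose Suc k) * ((real n - real (Suc k) + 1) / (real n + 1)) powr s"
    using j by (simp add: binomial_gbinomial gbinomial_Suc_right powr_divide j_def field_simps)
  finally show ?case .
qed

lemma sum_div_mult_powr_le:
  fixes p :: real
  assumes "0 \<le> p"
  shows "(\<Sum>i=1..K. p / (real i * real i powr p)) \<le> 1 + p"
proof -
  have telescope: "(\<Sum>i=1..K. p / (real i * real i powr p)) \<le> 1 + p - 1 / real K powr p"
    if "1 \<le> K" for K
    using that
  proof (induction K rule: nat_induct_at_least)
    case base
    then show ?case by simp
  next
    case (Suc K)
    have K: "1 \<le> real K" using Suc by simp
    have pos: "0 < real K powr p" "0 < (real K + 1) powr p" using K by auto
    have "p / ((real K + 1) * (real K + 1) powr p) + 1 / (real K + 1) powr p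
        = (1 + p / (real K + 1)) / (real K + 1) powr p"
      using K by (simp add: add_divide_distrib)
    also have "\<dots> \<le> ((real K + 1) powr p / real K powr p) / (real K + 1) powr p"
      using one_plus_div_succ_le_powr_ratio[of "real K" p] K pos assms
      by (intro divide_right_mono) auto
    also have "\<dots> = 1 / real K powr p" using pos by simp
    finally have "p / ((real K + 1) * (real K + 1) powr p) + 1 / (real K + 1) powr p
        \<le> 1 / real K powr p" .
    then show ?case using Suc.IH by (simp add: add.commute)
  qed
  show ?thesis
  proof (cases "K = 0")
    case False
    have "0 \<le> 1 / real K powr p" by simp
    with telescope[of K] False show ?thesis by linarith
  qed (use assms in simp)
qed

lemma sum_lower_half_le:
  fixes p :: real
  assumes "0 \<le> p"
  shows "(\<Sum>i=1..m-1. if 2 * i \<le> m then p / (real i * real i powr p) * (1 + 2 * real i / real m)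
                         else 0) \<le> 1 + 2 * p"
proof -
  have term_le: "(if 2 * i \<le> m then p / (real i * real i powr p) * (1 + 2 * real i / real m) else 0)
      \<le> p / (real i * real i powr p) + (if 2 * i \<le> m then 2 * p / real m else 0)"
    if "1 \<le> i" for i
  proof -
    have "p / (real i * real i powr p) * (2 * real i / real m) = 2 * p / real m / real i powr p"
      using that by (simp add: field_simps)
    also have "\<dots> \<le> 2 * p / real m / 1"
      using that assms by (intro divide_left_mono) (auto simp: ge_one_powr_ge_zero)
    finally have "p / (real i * real i powr p) * (2 * real i / real m) \<le> 2 * p / real m"
      by simp
    then show ?thesis using assms by (auto simp: distrib_left)
  qed
  have count: "(\<Sum>i=1..m-1. if 2 * i \<le> m then 2 * p / real m else 0) \<le> p"
  proof -
    have "card {i \<in> {1..m-1}. 2 * i \<le> m} \<le> card {1..m div 2}"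
      by (intro card_mono) auto
    then have "p * (real (card {i \<in> {1..m-1}. 2 * i \<le> m}) * 2) \<le> p * real m"
      using assms by (intro mult_left_mono) simp_all
    then show ?thesis using assms
      by (cases "m = 0") (simp_all add: sum.inter_filter[symmetric] divide_le_eq mult_ac)
  qed
  have "(\<Sum>i=1..m-1. if 2 * i \<le> m then p / (real i * real i powr p) * (1 + 2 * real i / real m)
                         else 0)
      \<le> (\<Sum>i=1..m-1. p / (real i * real i powr p)) + (\<Sum>i=1..m-1. if 2 * i \<le> m then 2 * p / real m else 0)"
    unfolding sum.distrib[symmetric] by (intro sum_mono term_le) auto
  also have "\<dots> \<le> 1 + p + p"
    using sum_div_mult_powr_le[OF assms, of "m - 1"] count by linarith
  finally show ?thesis by simp
qed

text \<open>The function q \<mapsto> q exp(-q (ln x - 1)) attains its maximum 1/(e (ln x - 1)).\<close>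
lemma mult_three_div_powr_le:
  fixes q x :: real
  assumes "0 \<le> q" "q \<le> 1" "exp 1 < x"
  shows "q * (3 / x) powr q \<le> 3 / (exp 1 ^ 2 * (ln x - 1))"
proof -
  have x: "0 < x" using assms(3) exp_gt_zero[of 1] by linarith
  have L: "0 < ln x - 1" using assms(3) ln_less_cancel_iff[of "exp 1" x] x by simp
  have "(3 / x) powr q = (3 / exp 1) powr q * (exp 1 / x) powr q"
    by (simp add: powr_mult[symmetric])
  also have "\<dots> \<le> 3 / exp 1 * (exp 1 / x) powr q"
    using powr_mono[of q 1 "3 / exp 1"] assms exp_le by (intro mult_right_mono) auto
  finally have "q * (3 / x) powr q \<le> q * (3 / exp 1 * (exp 1 / x) powr q)"
    using assms(1) by (rule mult_left_mono)
  then have split: "q * (3 / x) powr q \<le> 3 / exp 1 * (q * (exp 1 / x) powr q)"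
    by (simp add: mult_ac)
  define y where "y = q * (ln x - 1)"
  have "exp 1 * y \<le> exp y"
    using exp_ge_add_one_self[of "y - 1"] by (simp add: exp_diff field_simps)
  then have "exp 1 * y * exp (- y) / (exp 1 * (ln x - 1)) \<le> exp y * exp (- y) / (exp 1 * (ln x - 1))"
    using L by (intro divide_right_mono mult_right_mono) auto
  moreover have "(exp 1 / x) powr q = exp (- y)"
    using x by (simp add: y_def powr_def ln_div algebra_simps)
  moreover have "exp 1 * y * exp (- y) / (exp 1 * (ln x - 1)) = q * exp (- y)"
    using L by (simp add: y_def)
  ultimately have "q * (exp 1 / x) powr q \<le> 1 / (exp 1 * (ln x - 1))"
    by (simp add: exp_minus_inverse)
  from split mult_left_mono[OF this, of "3 / exp 1"] show ?thesis
    by (simp add: power2_eq_square)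
qed

text \<open>Weighted AM-GM, r powr p \<le> p r + (1 - p), reduces this to a quadratic in p.\<close>
lemma one_plus_two_mult_powr_le:
  fixes r p :: real
  assumes "0 < r" "r \<le> 1" "0 \<le> p" "p \<le> 1"
  shows "(1 + 2 * p) * r powr p \<le> 9 / 8 + 2 * r"
proof -
  have "r powr p * 1 powr (1 - p) \<le> p * r + (1 - p) * 1"
    using assms by (intro Youngs_inequality_0) auto
  then have "(1 + 2 * p) * r powr p \<le> (1 + 2 * p) * (p * r + (1 - p))"
    using assms by (intro mult_left_mono) auto
  also have "\<dots> \<le> 9 / 8 + 2 * r"
  proof (cases "2 - p - 2 * p\<^sup>2 \<ge> 0")
    case True
    then have "0 \<le> r * (2 - p - 2 * p\<^sup>2)" using assms by simp
    moreover have "0 \<le> 2 * (p - 1 / 4)\<^sup>2" by simp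
    ultimately show ?thesis by (simp add: algebra_simps power2_eq_square)
  next
    case False
    then have "1 * (2 - p - 2 * p\<^sup>2) \<le> r * (2 - p - 2 * p\<^sup>2)"
      using assms by (intro mult_right_mono_neg) auto
    then show ?thesis using assms by (simp add: algebra_simps power2_eq_square)
  qed
  finally show ?thesis .
qed

lemma inverse_diff_le:
  fixes i m :: real
  assumes "0 \<le> i" "2 * i \<le> m" "i < m"
  shows "1 / (m - i) \<le> (1 + 2 * i / m) / m"
proof -
  have "m * m \<le> (m - i) * (m + 2 * i)"
    using mult_left_mono[OF assms(2) assms(1)] by (simp add: algebra_simps)
  moreover have "(1 + 2 * i / m) / m = (m + 2 * i) / (m * m)"
    using assms by (simp add: field_simps)
  ultimately show ?thesis
    using assms by (simp add: divide_le_eq le_divide_eq mult.commute)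
qed

lemma powr_mult_abs_gbinomial_le:
  fixes q :: real
  assumes n: "4 \<le> n" and q: "0 \<le> q" "q \<le> 1" and j: "1 \<le> j" "m \<le> 2 * j"
  shows "((real m + 1) / (real n + 1)) powr q * \<bar>q gchoose j\<bar>
           \<le> 3 / (exp 1 ^ 2 * (ln (real n) - 1)) / real j"
proof -
  define r where "r = (real m + 1) / (real n + 1)"
  have r: "0 < r" by (simp add: r_def)
  have "real n * 1 \<le> real n * real j" "real n * real m \<le> real n * (2 * real j)"
    using j by (intro mult_left_mono; simp)+
  then have "real n * (real m + 1) \<le> 3 * ((real n + 1) * real j)"
    by (simp add: algebra_simps)
  then have r_le: "r / real j \<le> 3 / real n"
    using j n by (simp add: r_def divide_le_eq le_divide_eq mult_ac)
  have "r powr q * \<bar>q gchoose j\<bar> \<le> r powr q * (q / (real j * real j powr q))"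
    using abs_gbinomial_le[of q j] q j by (intro mult_left_mono) auto
  also have "\<dots> = q * (r / real j) powr q / real j"
    using j r by (simp add: powr_divide mult_ac)
  also have "\<dots> \<le> q * (3 / real n) powr q / real j"
    using r_le q r j by (intro divide_right_mono mult_left_mono powr_mono2) auto
  also have "\<dots> \<le> 3 / (exp 1 ^ 2 * (ln (real n) - 1)) / real j"
    using mult_three_div_powr_le[of q "real n"] exp_le q n by (intro divide_right_mono) auto
  finally show ?thesis by (simp add: r_def)
qed

lemma lagrange_term_le:
  fixes p q :: real
  assumes n: "4 \<le> n" and p: "0 \<le> p" "p \<le> 1" and q: "0 \<le> q" "q \<le> 1"
    and m: "m \<le> n" and i: "1 \<le> i" "2 * i \<le> m"
  shows "\<bar>(real n - (p + q)) gchoose (n - m)\<bar> * \<bar>p gchoose i\<bar> * \<bar>q gchoose (m - i)\<bar>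
    \<le> real (n choose m) * (3 / (exp 1 ^ 2 * (ln (real n) - 1)) / real m)
       * (((real m + 1) / (real n + 1)) powr p * (p / (real i * real i powr p))
          * (1 + 2 * real i / real m))"
proof -
  define K where "K = 3 / (exp 1 ^ 2 * (ln (real n) - 1))"
  define r where "r = (real m + 1) / (real n + 1)"
  define P where "P = p / (real i * real i powr p)"
  have K: "0 \<le> K" using one_less_ln[of "real n"] n by (simp add: K_def)
  have P: "0 \<le> P" "\<bar>p gchoose i\<bar> \<le> P"
    using abs_gbinomial_le[of p i] p i by (simp_all add: P_def)
  have j: "real (m - i) = real m - real i" "1 \<le> m - i" "m \<le> 2 * (m - i)" using i by auto
  have s: "real (n - m) < real n - (p + q) + 1" "p + q < real n - real (n - m) + 1"
    using p q m i by auto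
  have "\<bar>(real n - (p + q)) gchoose (n - m)\<bar> \<le> real (n choose m) * r powr (p + q)"
    using gbinomial_pos[OF s(1)] gbinomial_le_binomial_powr[OF _ s(2)] p q m
    by (simp add: r_def binomial_symmetric[OF m, symmetric])
  then have "\<bar>(real n - (p + q)) gchoose (n - m)\<bar> * \<bar>p gchoose i\<bar> * \<bar>q gchoose (m - i)\<bar>
      \<le> real (n choose m) * r powr (p + q) * P * \<bar>q gchoose (m - i)\<bar>"
    using P by (intro mult_mono mult_right_mono) auto
  also have "\<dots> = real (n choose m) * r powr p * P * (r powr q * \<bar>q gchoose (m - i)\<bar>)"
    by (simp add: powr_add)
  also have "\<dots> \<le> real (n choose m) * r powr p * P * (K / real (m - i))"
    using powr_mult_abs_gbinomial_le[OF n q j(2,3)] P by (intro mult_left_mono) (auto simp: r_def K_def)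
  also have "\<dots> \<le> real (n choose m) * r powr p * P * (K * ((1 + 2 * real i / real m) / real m))"
    using mult_left_mono[OF inverse_diff_le[of "real i" "real m"] K] i P j
    by (intro mult_left_mono) auto
  also have "\<dots> = real (n choose m) * (K / real m) * (r powr p * P * (1 + 2 * real i / real m))"
    by (simp add: field_simps)
  finally show ?thesis by (simp add: K_def r_def P_def)
qed

lemma lagrange_row_sum_le:
  fixes p q :: real
  assumes n: "4 \<le> n" and p: "0 \<le> p" "p \<le> 1" and q: "0 \<le> q" "q \<le> 1" and m: "m \<le> n"
  shows "(\<Sum>i=1..m-1. \<bar>(real n - (p + q)) gchoose (n - m)\<bar> * \<bar>p gchoose i\<bar> * \<bar>q gchoose (m - i)\<bar>)
    \<le> 2 * (3 / (exp 1 ^ 2 * (ln (real n) - 1)))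
       * (real (n choose m) * (9 / 8 + 2 * ((real m + 1) / (real n + 1))) / real m)"
proof -
  define C where "C = real (n choose m) * (3 / (exp 1 ^ 2 * (ln (real n) - 1)) / real m)"
  define r where "r = (real m + 1) / (real n + 1)"
  define V where "V a j = (if 2 * j \<le> m then a / (real j * real j powr a) * (1 + 2 * real j / real m)
                           else 0)" for a :: real and j :: nat
  have C: "0 \<le> C" using one_less_ln[of "real n"] n by (simp add: C_def)
  have r: "0 < r" "r \<le> 1" using m by (auto simp: r_def)
  have V: "0 \<le> V a j" if "0 \<le> a" for a j using that by (simp add: V_def)
  txt \<open>Each term is charged to the smaller of the indices i and m - i.\<close>
  have term_le: "\<bar>(real n - (p + q)) gchoose (n - m)\<bar> * \<bar>p gchoose i\<bar> * \<bar>q gchoose (m - i)\<bar>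
      \<le> C * (r powr p * V p i + r powr q * V q (m - i))"
    if i: "i \<in> {1..m-1}" for i
  proof (cases "2 * i \<le> m")
    case True
    then have "\<bar>(real n - (p + q)) gchoose (n - m)\<bar> * \<bar>p gchoose i\<bar> * \<bar>q gchoose (m - i)\<bar>
        \<le> C * (r powr p * V p i)"
      using lagrange_term_le[OF n p q m, of i] i by (simp add: C_def r_def V_def mult_ac)
    then show ?thesis using C V[OF q(1)] by (simp add: add_increasing2 distrib_left)
  next
    case False
    have i': "1 \<le> m - i" "2 * (m - i) \<le> m" "m - (m - i) = i" using i False by auto
    have "\<bar>(real n - (q + p)) gchoose (n - m)\<bar> * \<bar>q gchoose (m - i)\<bar> * \<bar>p gchoose (m - (m - i))\<bar>
        \<le> C * (r powr q * V q (m - i))"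
      using lagrange_term_le[OF n q p m i'(1,2)] i'(2) by (simp add: C_def r_def V_def mult_ac)
    then show ?thesis using C V[OF p(1)]
      by (simp add: i'(3) add_increasing distrib_left add.commute mult_ac)
  qed
  have reflect: "(\<Sum>i=1..m-1. V q (m - i)) = (\<Sum>i=1..m-1. V q i)"
    by (subst sum.atLeastAtMost_rev) (intro sum.cong; auto)
  have "(\<Sum>i=1..m-1. \<bar>(real n - (p + q)) gchoose (n - m)\<bar> * \<bar>p gchoose i\<bar> * \<bar>q gchoose (m - i)\<bar>)
      \<le> (\<Sum>i=1..m-1. C * (r powr p * V p i + r powr q * V q (m - i)))"
    by (intro sum_mono term_le)
  also have "\<dots> = C * (r powr p * (\<Sum>i=1..m-1. V p i) + r powr q * (\<Sum>i=1..m-1. V q i))"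
    unfolding reflect[symmetric] by (simp add: sum_distrib_left sum.distrib distrib_left)
  also have "\<dots> \<le> C * (r powr p * (1 + 2 * p) + r powr q * (1 + 2 * q))"
    using sum_lower_half_le[OF p(1), of m] sum_lower_half_le[OF q(1), of m] C
    by (intro mult_left_mono add_mono) (simp_all add: V_def)
  also have "\<dots> \<le> C * (2 * (9 / 8 + 2 * r))"
    using one_plus_two_mult_powr_le[OF r p] one_plus_two_mult_powr_le[OF r q] C
    by (intro mult_left_mono) (simp_all add: algebra_simps)
  also have "\<dots> = 2 * (3 / (exp 1 ^ 2 * (ln (real n) - 1)))
       * (real (n choose m) * (9 / 8 + 2 * ((real m + 1) / (real n + 1))) / real m)"
    by (simp add: C_def r_def)
  finally show ?thesis .
qed

lemma binomial_div_Suc_eq: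
  "real (n choose m) / (real m + 1) = real (Suc n choose Suc m) / (real n + 1)"
proof -
  have "real (Suc n) * real (n choose m) = real (Suc n choose Suc m) * real (Suc m)"
    using Suc_times_binomial_eq[of n m] by (metis of_nat_mult)
  then show ?thesis by (simp add: field_simps)
qed

lemma sum_binomial_shift_le: "(\<Sum>m\<le>n. real (n + d choose (m + d))) \<le> 2 ^ (n + d)"
proof -
  have "(\<Sum>m\<le>n. real (n + d choose (m + d))) = (\<Sum>k=d..n+d. real (n + d choose k))"
    using sum.shift_bounds_cl_nat_ivl[of "\<lambda>k. real (n + d choose k)" 0 d n]
    by (simp add: atMost_atLeast0)
  also have "\<dots> \<le> (\<Sum>k\<le>n+d. real (n + d choose k))"
    by (intro sum_mono2) auto
  also have "\<dots> = 2 ^ (n + d)"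
    using choose_row_sum[of "n + d"] by (metis of_nat_numeral of_nat_power of_nat_sum)
  finally show ?thesis .
qed

lemma sum_binomial_div_Suc_le:
  "(\<Sum>m\<le>n. real (n choose m) / (real m + 1)) \<le> 2 ^ (n + 1) / (real n + 1)"
  using divide_right_mono[OF sum_binomial_shift_le[of n 1], of "real n + 1"]
  by (simp add: binomial_div_Suc_eq sum_divide_distrib)

lemma sum_binomial_div_Suc_Suc_le:
  "(\<Sum>m\<le>n. real (n choose m) / ((real m + 1) * (real m + 2)))
     \<le> 2 ^ (n + 2) / ((real n + 1) * (real n + 2))"
proof -
  have "real (n choose m) / ((real m + 1) * (real m + 2))
      = real (n + 2 choose (m + 2)) / ((real n + 1) * (real n + 2))" for m
  proof -
    have "real (n choose m) / ((real m + 1) * (real m + 2))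
        = real (n choose m) / (real m + 1) / (real (Suc m) + 1)"
      by (simp add: divide_divide_eq_left add.commute)
    also have "\<dots> = real (Suc n choose Suc m) / (real n + 1) / (real (Suc m) + 1)"
      by (simp only: binomial_div_Suc_eq)
    also have "\<dots> = real (Suc n choose Suc m) / (real (Suc m) + 1) / (real n + 1)"
      by (simp only: divide_divide_eq_left mult.commute)
    also have "\<dots> = real (Suc (Suc n) choose Suc (Suc m)) / (real (Suc n) + 1) / (real n + 1)"
      by (simp only: binomial_div_Suc_eq)
    also have "\<dots> = real (n + 2 choose (m + 2)) / ((real n + 1) * (real n + 2))"
      by (simp add: divide_divide_eq_left mult.commute add.commute del: binomial_Suc_Suc)
    finally show ?thesis .
  qed
  then show ?thesis
    using divide_right_mono[OF sum_binomial_shift_le[of n 2], of "(real n + 1) * (real n + 2)"]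
    by (simp add: sum_divide_distrib)
qed

lemma binomial_weight_le:
  assumes "2 \<le> m"
  shows "real (n choose m) * (9 / 8 + 2 * ((real m + 1) / (real n + 1))) / real m
    \<le> (9 / 8 + 2 / (real n + 1)) * (real (n choose m) / (real m + 1)
          + 3 * (real (n choose m) / ((real m + 1) * (real m + 2))))
       + 2 * real (n choose m) / (real n + 1)"
proof -
  define c where "c = 9 / 8 + 2 / (real n + 1)"
  define C where "C = real (n choose m)"
  have m: "2 \<le> real m" using assms by simp
  have "1 / real m = (real m + 5) / (real m * (real m + 5))"
    using m by simp
  also have "\<dots> \<le> (real m + 5) / ((real m + 1) * (real m + 2))"
    using m by (intro divide_left_mono mult_pos_pos) (simp_all add: algebra_simps)
  also have "\<dots> = 1 / (real m + 1) + 3 / ((real m + 1) * (real m + 2))"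
    using m by (simp add: divide_simps)
  finally have "C * (1 / real m) \<le> C * (1 / (real m + 1) + 3 / ((real m + 1) * (real m + 2)))"
    by (intro mult_left_mono) (simp_all add: C_def)
  then have "c * (C / real m) \<le> c * (C / (real m + 1) + 3 * (C / ((real m + 1) * (real m + 2))))"
    by (intro mult_left_mono) (simp_all add: c_def field_simps)
  moreover have "C * (9 / 8 + 2 * ((real m + 1) / (real n + 1))) / real m
      = c * (C / real m) + 2 * C / (real n + 1)"
    using m unfolding c_def by (simp add: divide_simps) (simp add: algebra_simps)
  ultimately show ?thesis by (simp add: c_def C_def)
qed

lemma rational_bound_le:
  fixes N :: real
  assumes "4 \<le> N"
  shows "(9 / 8 + 2 / (N + 1)) * (2 / (N + 1) + 12 / ((N + 1) * (N + 2))) + 2 / (N + 1)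
           \<le> 13 / 3 / N * (1 + 15 / (N - 3))"
proof -
  define t where "t = 1 / N"
  have t: "0 < t" "t \<le> 1 / 4" using assms by (auto simp: t_def)
  have a: "2 / (N + 1) \<le> 2 * t" using assms by (simp add: t_def frac_le)
  have "12 / ((N + 1) * (N + 2)) \<le> 12 / (N * N)"
    using assms by (intro divide_left_mono mult_pos_pos) (simp_all add: algebra_simps)
  then have b: "12 / ((N + 1) * (N + 2)) \<le> 12 * t * t" by (simp add: t_def)
  have c: "15 * t \<le> 15 / (N - 3)" using assms by (simp add: t_def frac_le)
  have "(9 / 8 + 2 / (N + 1)) * (2 / (N + 1) + 12 / ((N + 1) * (N + 2))) + 2 / (N + 1)
      \<le> (9 / 8 + 2 * t) * (2 * t + 12 * t * t) + 2 * t"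
    using a b assms t by (intro add_mono mult_mono) auto
  also have "\<dots> = 17 / 4 * t + 35 / 2 * (t * t) + 24 * (t * t * t)"
    by (simp add: algebra_simps)
  also have "\<dots> \<le> 13 / 3 * t + 65 * (t * t)"
    using mult_left_mono[OF t(2), of "t * t"] mult_nonneg_nonneg[of t t] t by linarith
  also have "\<dots> = 13 / 3 * t * (1 + 15 * t)"
    by (simp add: algebra_simps)
  also have "\<dots> \<le> 13 / 3 * t * (1 + 15 / (N - 3))"
    using c t by (intro mult_left_mono) auto
  also have "\<dots> = 13 / 3 / N * (1 + 15 / (N - 3))"
    by (simp add: t_def)
  finally show ?thesis .
qed

lemma sum_binomial_weight_le:
  assumes "4 \<le> n"
  shows "(\<Sum>m=2..n. real (n choose m) * (9 / 8 + 2 * ((real m + 1) / (real n + 1))) / real m)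
     \<le> 2 ^ n * (13 / 3 / real n * (1 + 15 / (real n - 3)))"
proof -
  define c where "c = 9 / 8 + 2 / (real n + 1)"
  define B where "B m = c * (real (n choose m) / (real m + 1)
      + 3 * (real (n choose m) / ((real m + 1) * (real m + 2)))) + 2 * real (n choose m) / (real n + 1)"
    for m
  have c: "0 \<le> c" by (simp add: c_def)
  have "(\<Sum>m=2..n. real (n choose m) * (9 / 8 + 2 * ((real m + 1) / (real n + 1))) / real m)
      \<le> (\<Sum>m=2..n. B m)"
    unfolding B_def c_def by (rule sum_mono, rule binomial_weight_le) simp
  also have "\<dots> \<le> (\<Sum>m\<le>n. B m)"
    using c by (intro sum_mono2) (auto simp: B_def)
  also have "\<dots> = c * ((\<Sum>m\<le>n. real (n choose m) / (real m + 1))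
        + 3 * (\<Sum>m\<le>n. real (n choose m) / ((real m + 1) * (real m + 2))))
      + 2 * (\<Sum>m\<le>n. real (n choose m)) / (real n + 1)"
    by (simp only: B_def sum.distrib flip: sum_distrib_left sum_divide_distrib)
  also have "\<dots> \<le> c * (2 ^ (n + 1) / (real n + 1) + 3 * (2 ^ (n + 2) / ((real n + 1) * (real n + 2))))
      + 2 * 2 ^ n / (real n + 1)"
    using choose_row_sum[of n] sum_binomial_div_Suc_le[of n] sum_binomial_div_Suc_Suc_le[of n] c
    by (intro add_mono mult_left_mono) (simp_all flip: of_nat_sum)
  also have "\<dots> = 2 ^ n * (c * (2 / (real n + 1) + 12 / ((real n + 1) * (real n + 2))) + 2 / (real n + 1))"
    by (simp add: field_simps)
  also have "\<dots> \<le> 2 ^ n * (13 / 3 / real n * (1 + 15 / (real n - 3)))"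
    using rational_bound_le[of "real n"] assms by (intro mult_left_mono) (simp_all add: c_def)
  finally show ?thesis .
qed

lemma sum_lagr_idx_interior:
  "(\<Sum>x\<in>{(i1, i2, i3) \<in> lagr_idx n. i2 \<ge> 1 \<and> i3 \<ge> 1}. g x)
     = (\<Sum>m=2..n. \<Sum>i=1..m-1. g (n - m, i, m - i))"
proof -
  have "(\<Sum>x\<in>{(i1, i2, i3) \<in> lagr_idx n. i2 \<ge> 1 \<and> i3 \<ge> 1}. g x)
      = (\<Sum>(m, i)\<in>(SIGMA m:{2..n}. {1..m-1}). g (n - m, i, m - i))"
    by (rule sum.reindex_bij_witness[of _ "\<lambda>(m, i). (n - m, i, m - i)" "\<lambda>(_, i2, i3). (i2 + i3, i2)"])
       (auto simp: lagr_idx_def)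
  also have "\<dots> = (\<Sum>m=2..n. \<Sum>i=1..m-1. g (n - m, i, m - i))"
    by (rule sum.Sigma[symmetric]) auto
  finally show ?thesis .
qed

lemma exp_one_ge: "13 / 5 \<le> (exp 1 :: real)"
proof -
  have "(1 + 1 / real (20::nat)) ^ 20 \<le> (exp 1 :: real)"
    by (rule exp_ge_one_plus_x_over_n_power_n) auto
  moreover have "(13 / 5 :: real) \<le> (1 + 1 / real (20::nat)) ^ 20"
    by (simp add: power_divide)
  ultimately show ?thesis by linarith
qed

lemma final_constant_le:
  assumes "0 < n" "0 < L" "0 \<le> X"
  shows "2 * (3 / (exp 1 ^ 2 * L)) * (2 ^ n * (13 / 3 / real n * X))
           \<le> 5 * 2 ^ (n + 1) / (exp 1 * real n * L) * X"
proof -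
  define Z where "Z = 2 ^ n * X / (exp 1 * real n * L)"
  have "0 \<le> Z" using assms by (simp add: Z_def)
  moreover have "26 / exp 1 \<le> (10 :: real)" using exp_one_ge by (simp add: divide_le_eq)
  ultimately have "26 / exp 1 * Z \<le> 10 * Z" by (rule mult_right_mono[rotated])
  moreover have "2 * (3 / (exp 1 ^ 2 * L)) * (2 ^ n * (13 / 3 / real n * X)) = 26 / exp 1 * Z"
    using assms by (simp add: Z_def power2_eq_square field_simps)
  moreover have "5 * 2 ^ (n + 1) / (exp 1 * real n * L) * X = 10 * Z"
    by (simp add: Z_def field_simps)
  ultimately show ?thesis by simp
qed

theorem lemma26:
  fixes n :: nat and a1 a2 a3 :: real
  assumes "n \<ge> 4"
    and "0 < a2" "a2 < 1" "0 < a3" "a3 < 1"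
    and "a1 = 1 - a2 - a3"
  shows "(\<Sum>i\<in>{(i1, i2, i3) \<in> lagr_idx n. i2 \<ge> 1 \<and> i3 \<ge> 1}.
            \<bar>lagr_l n i ((real n - 1 + a1) / real n, a2 / real n, a3 / real n)\<bar>)
         \<le> 5 * 2 ^ (n + 1) / (exp 1 * real n * (ln (real n) - 1)) * (1 + 15 / (real n - 3))"
proof -
  define K where "K = 3 / (exp 1 ^ 2 * (ln (real n) - 1))"
  have "real n - 1 + a1 = real n - (a2 + a3)" using assms by simp
  then have "(\<Sum>i\<in>{(i1, i2, i3) \<in> lagr_idx n. i2 \<ge> 1 \<and> i3 \<ge> 1}.
            \<bar>lagr_l n i ((real n - 1 + a1) / real n, a2 / real n, a3 / real n)\<bar>)
      = (\<Sum>m=2..n. \<Sum>i=1..m-1.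
            \<bar>(real n - (a2 + a3)) gchoose (n - m)\<bar> * \<bar>a2 gchoose i\<bar> * \<bar>a3 gchoose (m - i)\<bar>)"
    using assms(1) by (simp only: sum_lagr_idx_interior abs_lagr_l_div)
  also have "\<dots> \<le> (\<Sum>m=2..n. 2 * K
      * (real (n choose m) * (9 / 8 + 2 * ((real m + 1) / (real n + 1))) / real m))"
    unfolding K_def by (intro sum_mono lagrange_row_sum_le) (use assms in auto)
  also have "\<dots> = 2 * K
      * (\<Sum>m=2..n. real (n choose m) * (9 / 8 + 2 * ((real m + 1) / (real n + 1))) / real m)"
    by (simp add: sum_distrib_left)
  also have "\<dots> \<le> 2 * K * (2 ^ n * (13 / 3 / real n * (1 + 15 / (real n - 3))))"
    using one_less_ln[of "real n"] assms(1)
    by (intro mult_left_mono sum_binomial_weight_le) (auto simp: K_def)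
  also have "\<dots> \<le> 5 * 2 ^ (n + 1) / (exp 1 * real n * (ln (real n) - 1)) * (1 + 15 / (real n - 3))"
    unfolding K_def using one_less_ln[of "real n"] assms(1) by (intro final_constant_le) auto
  finally show ?thesis .
qed

end
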